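(* Let $M$ be a timelike surface in $\mathbb{R}^{n,1}$ with a canonical null direction with respect to a constant unit spacelike vector $Z$, let $W$ be the lightlike tangent vector field on $M$ with $\langle Z^\top,W\rangle=-1$, and let $a:=\langle II(W,W),Z^\perp\rangle$. Then $$\nabla_{Z^{\top}}Z^{\top}=0,\quad \nabla_{Z^{\top}}W=0,\quad \nabla_WZ^{\top}=-aZ^{\top},\quad \nabla_WW=aW,$$ and consequently $[Z^{\top},W]=aZ^{\top}$.
   Context: $\mathbb{R}^{n,1}$ is $\mathbb{R}^{n+1}$ with the metric $-dx_1^2+dx_2^2+\dots+dx_{n+1}^2$. A surface is timelike if the induced metric has signature $(1,1)$; a vector $v$ is lightlike if $v\ne0$ and $\langle v,v\rangle=0$. For a constant vector $Z$, $Z=Z^\top+Z^\perp$ along $M$ (tangent and normal parts); $M$ has a canonical null direction with respect to $Z$ if $Z^\top$ is lightlike everywhere on $M$. Since the tangent planes are Lorentzian, there is a unique lightlike tangent field $W$ with $\langle Z^\top,W\rangle=-1$. $\nabla$ is the Levi-Civita connection of $M$ and $II$ its second fundamental form. *)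

theory Defs
  imports "HOL-Analysis.Analysis"
begin

text \<open>Minkowski space R^{n,1} modelled as real \<times> real^'n: first component is the
  time coordinate x_1, the second the spatial coordinates x_2..x_{n+1}.\<close>

type_synonym 'n mink_vec = "real \<times> (real ^ 'n)"

definition mink :: "'n::finite mink_vec \<Rightarrow> 'n mink_vec \<Rightarrow> real" where
  "mink v w = - fst v * fst w + snd v \<bullet> snd w"

definition lightlike :: "'n::finite mink_vec \<Rightarrow> bool" where
  "lightlike v \<longleftrightarrow> v \<noteq> 0 \<and> mink v v = 0"

fun Ck_on :: "nat \<Rightarrow> (real \<times> real) set \<Rightarrow> (real \<times> real \<Rightarrow> 'a::real_normed_vector) \<Rightarrow> bool" where
  "Ck_on 0 U f = continuous_on U f"
| "Ck_on (Suc k) U f = (\<exists>f1 f2. (\<forall>p\<in>U. (f has_derivative (\<lambda>h. fst h *\<^sub>R f1 p + snd h *\<^sub>R f2 p)) (at p))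
                          \<and> Ck_on k U f1 \<and> Ck_on k U f2)"

definition smooth_on :: "(real \<times> real) set \<Rightarrow> (real \<times> real \<Rightarrow> 'a::real_normed_vector) \<Rightarrow> bool" where
  "smooth_on U f \<longleftrightarrow> (\<forall>k. Ck_on k U f)"

definition dX :: "(real \<times> real \<Rightarrow> 'n::finite mink_vec) \<Rightarrow> real \<times> real \<Rightarrow> real \<times> real \<Rightarrow> 'n mink_vec" where
  "dX X p = frechet_derivative X (at p)"

definition tangent_space :: "(real \<times> real \<Rightarrow> 'n::finite mink_vec) \<Rightarrow> real \<times> real \<Rightarrow> 'n mink_vec set" where
  "tangent_space X p = range (dX X p)"

definition timelike_surface :: "(real \<times> real) set \<Rightarrow> (real \<times> real \<Rightarrow> 'n::finite mink_vec) \<Rightarrow> bool" where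
  "timelike_surface U X \<longleftrightarrow> open U \<and> smooth_on U X \<and>
     (\<forall>p\<in>U. inj (dX X p) \<and>
        (\<exists>e1 e2. e1 \<in> tangent_space X p \<and> e2 \<in> tangent_space X p \<and>
           mink e1 e1 = -1 \<and> mink e2 e2 = 1 \<and> mink e1 e2 = 0))"

definition tan_part :: "(real \<times> real \<Rightarrow> 'n::finite mink_vec) \<Rightarrow> real \<times> real \<Rightarrow> 'n mink_vec \<Rightarrow> 'n mink_vec" where
  "tan_part X p v = (THE u. u \<in> tangent_space X p \<and> (\<forall>w\<in>tangent_space X p. mink (v - u) w = 0))"

definition nor_part :: "(real \<times> real \<Rightarrow> 'n::finite mink_vec) \<Rightarrow> real \<times> real \<Rightarrow> 'n mink_vec \<Rightarrow> 'n mink_vec" where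
  "nor_part X p v = v - tan_part X p v"

text \<open>Vector fields along M are maps on the parameter domain. Ambient (flat) derivative D_v Y at X p
  for v tangent at X p.\<close>

definition amb_deriv :: "(real \<times> real \<Rightarrow> 'n::finite mink_vec) \<Rightarrow> real \<times> real \<Rightarrow> 'n mink_vec
     \<Rightarrow> (real \<times> real \<Rightarrow> 'n mink_vec) \<Rightarrow> 'n mink_vec" where
  "amb_deriv X p v Y = frechet_derivative Y (at p) (inv_into UNIV (dX X p) v)"

text \<open>Levi-Civita connection of M (Gauss formula: tangential part of the flat derivative) and
  second fundamental form (normal part).\<close>

definition cov :: "(real \<times> real \<Rightarrow> 'n::finite mink_vec) \<Rightarrow> real \<times> real
     \<Rightarrow> (real \<times> real \<Rightarrow> 'n mink_vec) \<Rightarrow> (real \<times> real \<Rightarrow> 'n mink_vec) \<Rightarrow> 'n mink_vec" where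
  "cov X p V Y = tan_part X p (amb_deriv X p (V p) Y)"

definition sff :: "(real \<times> real \<Rightarrow> 'n::finite mink_vec) \<Rightarrow> real \<times> real
     \<Rightarrow> (real \<times> real \<Rightarrow> 'n mink_vec) \<Rightarrow> (real \<times> real \<Rightarrow> 'n mink_vec) \<Rightarrow> 'n mink_vec" where
  "sff X p V Y = nor_part X p (amb_deriv X p (V p) Y)"

definition lie_bracket :: "(real \<times> real \<Rightarrow> 'n::finite mink_vec) \<Rightarrow> real \<times> real
     \<Rightarrow> (real \<times> real \<Rightarrow> 'n mink_vec) \<Rightarrow> (real \<times> real \<Rightarrow> 'n mink_vec) \<Rightarrow> 'n mink_vec" where
  "lie_bracket X p V Y =
     (let v = (\<lambda>q. inv_into UNIV (dX X q) (V q)); y = (\<lambda>q. inv_into UNIV (dX X q) (Y q))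
      in dX X p (frechet_derivative y (at p) (v p) - frechet_derivative v (at p) (y p)))"

end

theory Submission
  imports Defs
begin

text \<open>
  Differentiating the identities <ZT, ZT> = 0, <W, W> = 0, <ZT, W> = -1 and the normality of
  Z - ZT yields the Minkowski products of the ambient derivatives of ZT and W with the null frame
  (ZT, W). Since this frame spans every tangent plane, these products determine the tangential
  parts, i.e. the covariant derivatives. The one product not fixed by the identities,
  <D_ZT ZT, W>, vanishes because the derivative of ZT is self-adjoint: it is the shape operator of
  Z - ZT, whose symmetry is that of the second partial derivatives of X. The bracket formula then
  follows because the Levi-Civita connection is torsion free.
\<close>

section \<open>Calculus in the parameter plane\<close>

lemma has_real_derivative_partial1:
  fixes g :: "real \<times> real \<Rightarrow> real"
  assumes "(g has_derivative (\<lambda>h. fst h * gu + snd h * gv)) (at (x, y))"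
  shows "((\<lambda>s. g (s, y)) has_real_derivative gu) (at x)"
proof -
  have "((\<lambda>s. (s, y)) has_derivative (\<lambda>h. (h, 0))) (at x)"
    by (auto intro!: derivative_eq_intros)
  from has_derivative_compose[OF this assms]
  have "((\<lambda>s. g (s, y)) has_derivative (\<lambda>h. h * gu)) (at x)" by simp
  moreover have "(\<lambda>h. h * gu) = (*) gu" by (auto simp: fun_eq_iff)
  ultimately show ?thesis by (simp add: has_field_derivative_def)
qed

lemma has_real_derivative_partial2:
  fixes g :: "real \<times> real \<Rightarrow> real"
  assumes "(g has_derivative (\<lambda>h. fst h * gu + snd h * gv)) (at (x, y))"
  shows "((\<lambda>s. g (x, s)) has_real_derivative gv) (at y)"
proof -
  have "((\<lambda>s. (x, s)) has_derivative (\<lambda>h. (0, h))) (at y)"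
    by (auto intro!: derivative_eq_intros)
  from has_derivative_compose[OF this assms]
  have "((\<lambda>s. g (x, s)) has_derivative (\<lambda>h. h * gv)) (at y)" by simp
  moreover have "(\<lambda>h. h * gv) = (*) gv" by (auto simp: fun_eq_iff)
  ultimately show ?thesis by (simp add: has_field_derivative_def)
qed

lemma has_derivative_swap_args:
  fixes g :: "real \<times> real \<Rightarrow> real"
  assumes "(g has_derivative (\<lambda>h. fst h * gu + snd h * gv)) (at (x, y))"
  shows "((\<lambda>q. g (snd q, fst q)) has_derivative (\<lambda>h. fst h * gv + snd h * gu)) (at (y, x))"
proof -
  have "((\<lambda>q. (snd q, fst q)) has_derivative (\<lambda>h. (snd h, fst h))) (at (y, x))"
    by (auto intro!: derivative_eq_intros)
  moreover have "(g has_derivative (\<lambda>h. fst h * gu + snd h * gv)) (at ((\<lambda>q. (snd q, fst q)) (y, x)))"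
    using assms by simp
  ultimately show ?thesis
    using has_derivative_compose by (fastforce simp: add.commute)
qed

lemma square_difference_eq_mixed_partial:
  fixes g gu gv guu guv :: "real \<times> real \<Rightarrow> real"
  assumes t: "t > 0"
    and dg: "\<And>x y. x \<in> {a..a+t} \<Longrightarrow> y \<in> {b..b+t} \<Longrightarrow>
      (g has_derivative (\<lambda>h. fst h * gu (x, y) + snd h * gv (x, y))) (at (x, y))"
    and du: "\<And>x y. x \<in> {a..a+t} \<Longrightarrow> y \<in> {b..b+t} \<Longrightarrow>
      (gu has_derivative (\<lambda>h. fst h * guu (x, y) + snd h * guv (x, y))) (at (x, y))"
  shows "\<exists>x\<in>{a..a+t}. \<exists>y\<in>{b..b+t}.
    g (a+t, b+t) - g (a+t, b) - g (a, b+t) + g (a, b) = t * t * guv (x, y)"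
proof -
  have "\<exists>x>a. x < a + t \<and> (\<lambda>s. g (s, b+t) - g (s, b)) (a+t) - (\<lambda>s. g (s, b+t) - g (s, b)) a
      = (a + t - a) * (gu (x, b+t) - gu (x, b))"
  proof (rule MVT2)
    fix x assume "a \<le> x" "x \<le> a + t"
    with t show "((\<lambda>s. g (s, b+t) - g (s, b)) has_real_derivative gu (x, b+t) - gu (x, b)) (at x)"
      by (intro DERIV_diff has_real_derivative_partial1[OF dg]) auto
  qed (use t in auto)
  then obtain x where x: "a < x" "x < a + t"
    and ex: "g (a+t, b+t) - g (a+t, b) - (g (a, b+t) - g (a, b)) = t * (gu (x, b+t) - gu (x, b))"
    by auto
  have "\<exists>y>b. y < b + t \<and> gu (x, b+t) - gu (x, b) = (b + t - b) * guv (x, y)"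
  proof (rule MVT2)
    fix y assume "b \<le> y" "y \<le> b + t"
    with x show "((\<lambda>s. gu (x, s)) has_real_derivative guv (x, y)) (at y)"
      by (intro has_real_derivative_partial2[OF du]) auto
  qed (use t in auto)
  then obtain y where y: "b < y" "y < b + t" and ey: "gu (x, b+t) - gu (x, b) = t * guv (x, y)"
    by auto
  from ex ey have "g (a+t, b+t) - g (a+t, b) - g (a, b+t) + g (a, b) = t * t * guv (x, y)"
    by (simp add: algebra_simps)
  moreover have "x \<in> {a..a+t}" "y \<in> {b..b+t}" using x y by auto
  ultimately show ?thesis by blast
qed

lemma dist_le_in_square:
  assumes "x \<in> {a..a+t}" "y \<in> {b..b+t}"
  shows "dist (x, y) (a, b) \<le> 2 * t"
proof -
  have "dist (x, y) (a, b) = sqrt ((dist x a)\<^sup>2 + (dist y b)\<^sup>2)"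
    by (simp add: dist_prod_def)
  also have "\<dots> \<le> \<bar>dist x a\<bar> + \<bar>dist y b\<bar>" by (rule sqrt_sum_squares_le_sum_abs)
  also have "\<dots> \<le> 2 * t" using assms by (auto simp: dist_real_def)
  finally show ?thesis .
qed

lemma mixed_partials_eq:
  fixes g gu gv guu guv gvu gvv :: "real \<times> real \<Rightarrow> real"
  assumes U: "open U" and p: "p \<in> U"
    and dg: "\<And>q. q \<in> U \<Longrightarrow> (g has_derivative (\<lambda>h. fst h * gu q + snd h * gv q)) (at q)"
    and du: "\<And>q. q \<in> U \<Longrightarrow> (gu has_derivative (\<lambda>h. fst h * guu q + snd h * guv q)) (at q)"
    and dv: "\<And>q. q \<in> U \<Longrightarrow> (gv has_derivative (\<lambda>h. fst h * gvu q + snd h * gvv q)) (at q)"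
    and cont_uv: "continuous_on U guv" and cont_vu: "continuous_on U gvu"
  shows "guv p = gvu p"
proof (rule ccontr)
  assume ne: "guv p \<noteq> gvu p"
  define d where "d = \<bar>guv p - gvu p\<bar> / 2"
  have d: "d > 0" using ne by (simp add: d_def)
  obtain r where r: "r > 0" "ball p r \<subseteq> U" using U p openE by blast
  obtain e1 where e1: "e1 > 0" "\<forall>q\<in>U. dist q p < e1 \<longrightarrow> dist (guv q) (guv p) < d"
    using cont_uv p d unfolding continuous_on_iff by blast
  obtain e2 where e2: "e2 > 0" "\<forall>q\<in>U. dist q p < e2 \<longrightarrow> dist (gvu q) (gvu p) < d"
    using cont_vu p d unfolding continuous_on_iff by blast
  define t where "t = min r (min e1 e2) / 4"
  have t: "t > 0" using r e1 e2 by (simp add: t_def)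
  obtain a b where ab: "p = (a, b)" by fastforce
  have close: "dist (x, y) p < min r (min e1 e2)" if "x \<in> {a..a+t}" "y \<in> {b..b+t}" for x y
    using dist_le_in_square[OF that] t unfolding ab t_def by linarith
  have in_U: "(x, y) \<in> U" if "x \<in> {a..a+t}" "y \<in> {b..b+t}" for x y
    using close[OF that] r by (auto simp: dist_commute)
  obtain x1 y1 where 1: "x1 \<in> {a..a+t}" "y1 \<in> {b..b+t}"
    "g (a+t, b+t) - g (a+t, b) - g (a, b+t) + g (a, b) = t * t * guv (x1, y1)"
    using square_difference_eq_mixed_partial[OF t, of a b g gu gv guu guv] dg du in_U by blast
  \<comment> \<open>the same second difference, read with the two variables exchanged\<close>
  obtain y2 x2 where 2: "y2 \<in> {b..b+t}" "x2 \<in> {a..a+t}"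
    "g (a+t, b+t) - g (a, b+t) - g (a+t, b) + g (a, b) = t * t * gvu (x2, y2)"
    using square_difference_eq_mixed_partial[OF t, of b a "\<lambda>q. g (snd q, fst q)"
        "\<lambda>q. gv (snd q, fst q)" "\<lambda>q. gu (snd q, fst q)" "\<lambda>q. gvv (snd q, fst q)" "\<lambda>q. gvu (snd q, fst q)"]
      has_derivative_swap_args dg dv in_U by fastforce
  have "t * t * guv (x1, y1) = t * t * gvu (x2, y2)" using 1(3) 2(3) by linarith
  with t have eq: "guv (x1, y1) = gvu (x2, y2)" by simp
  have "dist (guv (x1, y1)) (guv p) < d" using e1 close[OF 1(1,2)] in_U[OF 1(1,2)] by auto
  moreover have "dist (gvu (x2, y2)) (gvu p) < d" using e2 close[OF 2(2,1)] in_U[OF 2(2,1)] by auto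
  ultimately show False using eq unfolding d_def dist_real_def by (auto simp: abs_if split: if_split_asm)
qed

definition comb2 :: "'a::real_vector \<Rightarrow> 'a \<Rightarrow> real \<times> real \<Rightarrow> 'a" where
  "comb2 e f k = fst k *\<^sub>R e + snd k *\<^sub>R f"

lemma mixed_partials_eq_vector:
  fixes g g1 g2 g11 g12 g21 g22 :: "real \<times> real \<Rightarrow> 'a::real_inner"
  assumes U: "open U" and p: "p \<in> U"
    and dg: "\<And>q. q \<in> U \<Longrightarrow> (g has_derivative comb2 (g1 q) (g2 q)) (at q)"
    and d1: "\<And>q. q \<in> U \<Longrightarrow> (g1 has_derivative comb2 (g11 q) (g12 q)) (at q)"
    and d2: "\<And>q. q \<in> U \<Longrightarrow> (g2 has_derivative comb2 (g21 q) (g22 q)) (at q)"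
    and cont12: "continuous_on U g12" and cont21: "continuous_on U g21"
  shows "g12 p = g21 p"
proof -
  have "inner (g12 p) c = inner (g21 p) c" for c
  proof (rule mixed_partials_eq[OF U p])
    show "((\<lambda>q. inner (g q) c) has_derivative (\<lambda>h. fst h * inner (g1 q) c + snd h * inner (g2 q) c)) (at q)"
      if "q \<in> U" for q
      using dg[OF that] by (auto intro: has_derivative_eq_rhs[OF has_derivative_inner_left] simp: comb2_def inner_add_left)
    show "((\<lambda>q. inner (g1 q) c) has_derivative (\<lambda>h. fst h * inner (g11 q) c + snd h * inner (g12 q) c)) (at q)"
      if "q \<in> U" for q
      using d1[OF that] by (auto intro: has_derivative_eq_rhs[OF has_derivative_inner_left] simp: comb2_def inner_add_left)
    show "((\<lambda>q. inner (g2 q) c) has_derivative (\<lambda>h. fst h * inner (g21 q) c + snd h * inner (g22 q) c)) (at q)"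
      if "q \<in> U" for q
      using d2[OF that] by (auto intro: has_derivative_eq_rhs[OF has_derivative_inner_left] simp: comb2_def inner_add_left)
  qed (intro continuous_intros cont12 cont21)+
  from this[of "g12 p - g21 p"] have "inner (g12 p - g21 p) (g12 p - g21 p) = 0"
    by (simp add: inner_diff_left)
  then show ?thesis by simp
qed

lemma differentiable_transform_within_open:
  "f differentiable (at x) \<Longrightarrow> open S \<Longrightarrow> x \<in> S \<Longrightarrow> (\<And>y. y \<in> S \<Longrightarrow> f y = g y)
    \<Longrightarrow> g differentiable (at x)"
  unfolding differentiable_def using has_derivative_transform_within_open by blast

lemma frechet_derivative_const_minus:
  "V differentiable (at p) \<Longrightarrow> frechet_derivative (\<lambda>q. c - V q) (at p) h = - frechet_derivative V (at p) h"
  using has_derivative_diff[OF has_derivative_const frechet_derivative_works[THEN iffD1]]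
  by (metis diff_0 frechet_derivative_at)

section \<open>The Minkowski form\<close>

lemma mink_comm: "mink v w = mink w v"
  by (simp add: mink_def inner_commute)

lemma mink_add_left [simp]: "mink (u + v) w = mink u w + mink v w"
  and mink_add_right [simp]: "mink w (u + v) = mink w u + mink w v"
  and mink_diff_left [simp]: "mink (u - v) w = mink u w - mink v w"
  and mink_diff_right [simp]: "mink w (u - v) = mink w u - mink w v"
  and mink_minus_left [simp]: "mink (- u) w = - mink u w"
  and mink_minus_right [simp]: "mink w (- u) = - mink w u"
  and mink_scaleR_left [simp]: "mink (r *\<^sub>R u) w = r * mink u w"
  and mink_scaleR_right [simp]: "mink w (r *\<^sub>R u) = r * mink w u"
  and mink_zero_left [simp]: "mink 0 w = 0"
  and mink_zero_right [simp]: "mink w 0 = 0"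
  by (simp_all add: mink_def algebra_simps)

lemma bounded_bilinear_mink: "bounded_bilinear (mink :: 'n::finite mink_vec \<Rightarrow> _)"
proof
  show "\<exists>K. \<forall>a b :: 'n mink_vec. norm (mink a b) \<le> norm a * norm b * K"
  proof (intro exI allI)
    fix a b :: "'n mink_vec"
    have "norm (mink a b) \<le> \<bar>fst a\<bar> * \<bar>fst b\<bar> + \<bar>snd a \<bullet> snd b\<bar>"
      by (simp add: mink_def abs_mult[symmetric])
    also have "\<dots> \<le> norm a * norm b + norm a * norm b"
    proof (rule add_mono)
      show "\<bar>fst a\<bar> * \<bar>fst b\<bar> \<le> norm a * norm b"
        using mult_mono[OF norm_fst_le[of "fst a" "snd a"] norm_fst_le[of "fst b" "snd b"]] by simp
      have "\<bar>snd a \<bullet> snd b\<bar> \<le> norm (snd a) * norm (snd b)" by (rule Cauchy_Schwarz_ineq2)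
      also have "\<dots> \<le> norm a * norm b"
        using mult_mono[OF norm_snd_le[of "snd a" "fst a"] norm_snd_le[of "snd b" "fst b"]] by simp
      finally show "\<bar>snd a \<bullet> snd b\<bar> \<le> norm a * norm b" .
    qed
    finally show "norm (mink a b) \<le> norm a * norm b * 2" by simp
  qed
qed simp_all

lemmas has_derivative_mink [derivative_intros] = bounded_bilinear.FDERIV[OF bounded_bilinear_mink]

lemma differentiable_mink [derivative_intros]:
  "f differentiable (at x within s) \<Longrightarrow> g differentiable (at x within s) \<Longrightarrow>
    (\<lambda>x. mink (f x) (g x)) differentiable (at x within s)"
  unfolding differentiable_def by (blast intro: has_derivative_mink)

lemma mink_derivative_eq_0_if_const:
  assumes U: "open U" "p \<in> U" and const: "\<And>q. q \<in> U \<Longrightarrow> mink (V q) (Y q) = c"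
    and "V differentiable (at p)" "Y differentiable (at p)"
  shows "mink (V p) (frechet_derivative Y (at p) h) + mink (frechet_derivative V (at p) h) (Y p) = 0"
proof -
  have "((\<lambda>q. mink (V q) (Y q)) has_derivative
      (\<lambda>h. mink (V p) (frechet_derivative Y (at p) h) + mink (frechet_derivative V (at p) h) (Y p))) (at p)"
    using assms(4,5) by (intro has_derivative_mink) (simp_all add: frechet_derivative_works)
  moreover have "((\<lambda>q. mink (V q) (Y q)) has_derivative (\<lambda>h. 0)) (at p)"
    by (rule has_derivative_transform_within_open[OF has_derivative_const U]) (simp add: const)
  ultimately have "(\<lambda>h. mink (V p) (frechet_derivative Y (at p) h) + mink (frechet_derivative V (at p) h) (Y p))
      = (\<lambda>h. 0)"
    by (rule has_derivative_unique)
  then show ?thesis by (simp add: fun_eq_iff)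
qed

section \<open>Orthogonal projection onto a nondegenerate plane\<close>

definition gram2 :: "'n::finite mink_vec \<Rightarrow> 'n mink_vec \<Rightarrow> real" where
  "gram2 e f = mink e e * mink f f - (mink e f)\<^sup>2"

text \<open>Cramer's rule for the coefficients of the orthogonal projection onto the plane spanned by e and f.\<close>

definition coords2 :: "'n::finite mink_vec \<Rightarrow> 'n mink_vec \<Rightarrow> 'n mink_vec \<Rightarrow> real \<times> real" where
  "coords2 e f v = ((mink f f * mink v e - mink e f * mink v f) / gram2 e f,
                    (mink e e * mink v f - mink e f * mink v e) / gram2 e f)"

lemma comb2_scaleR: "comb2 e f (c *\<^sub>R k) = c *\<^sub>R comb2 e f k"
  and comb2_diff: "comb2 e f (k - l) = comb2 e f k - comb2 e f l"
  by (simp_all add: comb2_def algebra_simps)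

lemma mink_comb2_right: "mink v (comb2 e f k) = fst k * mink v e + snd k * mink v f"
  by (simp add: comb2_def)

lemma gram2_comb2:
  "gram2 (comb2 e f a) (comb2 e f b) = (fst a * snd b - snd a * fst b)\<^sup>2 * gram2 e f"
  unfolding gram2_def comb2_def
  by (simp add: mink_comm[of f e] power2_eq_square algebra_simps)

lemma coords2_comb2: "gram2 e f \<noteq> 0 \<Longrightarrow> coords2 e f (comb2 e f k) = k"
  unfolding coords2_def comb2_def prod_eq_iff
  by (simp add: mink_comm[of f e] field_simps gram2_def power2_eq_square)

lemma cramer_rule_2x2:
  fixes A B C P Q :: real
  assumes "A * C - B\<^sup>2 \<noteq> 0"
  shows "(C * P - B * Q) / (A * C - B\<^sup>2) * A + (A * Q - B * P) / (A * C - B\<^sup>2) * B = P"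
    and "(C * P - B * Q) / (A * C - B\<^sup>2) * B + (A * Q - B * P) / (A * C - B\<^sup>2) * C = Q"
proof -
  have "(C * P - B * Q) * A + (A * Q - B * P) * B = P * (A * C - B\<^sup>2)"
    and "(C * P - B * Q) * B + (A * Q - B * P) * C = Q * (A * C - B\<^sup>2)"
    by (simp_all add: algebra_simps power2_eq_square)
  with assms show "(C * P - B * Q) / (A * C - B\<^sup>2) * A + (A * Q - B * P) / (A * C - B\<^sup>2) * B = P"
    and "(C * P - B * Q) / (A * C - B\<^sup>2) * B + (A * Q - B * P) / (A * C - B\<^sup>2) * C = Q"
    by (simp_all add: add_divide_distrib[symmetric])
qed

lemma homogeneous_2x2_trivial:
  fixes a1 a2 b1 b2 x y :: real
  assumes "a1 * x + a2 * y = 0" "b1 * x + b2 * y = 0" "a1 * b2 - a2 * b1 \<noteq> 0"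
  shows "x = 0 \<and> y = 0"
proof -
  have "(a1 * b2 - a2 * b1) * x = b2 * (a1 * x + a2 * y) - a2 * (b1 * x + b2 * y)"
    and "(a1 * b2 - a2 * b1) * y = a1 * (b1 * x + b2 * y) - b1 * (a1 * x + a2 * y)"
    by (simp_all add: algebra_simps)
  then have "(a1 * b2 - a2 * b1) * x = 0" "(a1 * b2 - a2 * b1) * y = 0"
    by (simp_all only: assms(1,2) mult_zero_right diff_zero)
  with assms(3) show ?thesis by simp
qed

lemma orth_comb2_coords2:
  assumes "gram2 e f \<noteq> 0"
  shows "mink (v - comb2 e f (coords2 e f v)) (comb2 e f k) = 0"
proof -
  define c where "c = coords2 e f v"
  have "fst c * mink e e + snd c * mink e f = mink v e"
    and "fst c * mink e f + snd c * mink f f = mink v f"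
    using cramer_rule_2x2[where A = "mink e e" and B = "mink e f" and C = "mink f f"
        and P = "mink v e" and Q = "mink v f"] assms
    unfolding c_def coords2_def gram2_def by simp_all
  then have "mink (v - comb2 e f c) e = 0" and "mink (v - comb2 e f c) f = 0"
    by (simp_all add: comb2_def mink_comm[of f e])
  then show ?thesis unfolding c_def by (simp add: mink_comb2_right)
qed

lemma orth_proj_comb2_iff:
  assumes "gram2 e f \<noteq> 0"
  shows "u \<in> range (comb2 e f) \<and> (\<forall>w\<in>range (comb2 e f). mink (v - u) w = 0)
    \<longleftrightarrow> u = comb2 e f (coords2 e f v)"
proof
  assume "u = comb2 e f (coords2 e f v)"
  with orth_comb2_coords2[OF assms] show "u \<in> range (comb2 e f) \<and> (\<forall>w\<in>range (comb2 e f). mink (v - u) w = 0)"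
    by auto
next
  assume u: "u \<in> range (comb2 e f) \<and> (\<forall>w\<in>range (comb2 e f). mink (v - u) w = 0)"
  then obtain k where k: "u = comb2 e f k" by auto
  have "e = comb2 e f (1, 0)" "f = comb2 e f (0, 1)" by (simp_all add: comb2_def)
  with u have "mink (v - u) e = 0" "mink (v - u) f = 0" by (metis rangeI)+
  then have "coords2 e f v = coords2 e f u" by (simp add: coords2_def mink_comm)
  with k coords2_comb2[OF assms] show "u = comb2 e f (coords2 e f v)" by simp
qed

lemma orth_comb2_if_orth_pair:
  assumes "fst a * snd b - snd a * fst b \<noteq> 0"
    and "mink x (comb2 e f a) = 0" "mink x (comb2 e f b) = 0"
  shows "mink x (comb2 e f k) = 0"
  using homogeneous_2x2_trivial[of "fst a" "mink x e" "snd a" "mink x f" "fst b" "snd b"] assms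
  by (simp add: mink_comb2_right)

section \<open>Surface patches\<close>

definition coord_field :: "(real \<times> real \<Rightarrow> 'n::finite mink_vec) \<Rightarrow> (real \<times> real \<Rightarrow> 'n mink_vec)
    \<Rightarrow> real \<times> real \<Rightarrow> real \<times> real" where
  "coord_field X V q = inv_into UNIV (dX X q) (V q)"

lemma amb_deriv_eq: "amb_deriv X p (V p) Y = frechet_derivative Y (at p) (coord_field X V p)"
  by (simp add: amb_deriv_def coord_field_def)

lemma lie_bracket_eq_coord_fields:
  "lie_bracket X p V Y = dX X p (frechet_derivative (coord_field X Y) (at p) (coord_field X V p)
     - frechet_derivative (coord_field X V) (at p) (coord_field X Y p))"
  unfolding lie_bracket_def Let_def coord_field_def[abs_def] ..

locale C2_patch =
  fixes U :: "(real \<times> real) set" and X :: "real \<times> real \<Rightarrow> 'n::finite mink_vec"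
    and X1 X2 X11 X12 X21 X22 :: "real \<times> real \<Rightarrow> 'n mink_vec"
  assumes open_U: "open U"
    and X_deriv: "q \<in> U \<Longrightarrow> (X has_derivative comb2 (X1 q) (X2 q)) (at q)"
    and X1_deriv: "q \<in> U \<Longrightarrow> (X1 has_derivative comb2 (X11 q) (X12 q)) (at q)"
    and X2_deriv: "q \<in> U \<Longrightarrow> (X2 has_derivative comb2 (X21 q) (X22 q)) (at q)"
    and X12_cont: "continuous_on U X12" and X21_cont: "continuous_on U X21"
    and nondegenerate: "q \<in> U \<Longrightarrow> gram2 (X1 q) (X2 q) \<noteq> 0"
begin

definition hessian :: "real \<times> real \<Rightarrow> real \<times> real \<Rightarrow> real \<times> real \<Rightarrow> 'n mink_vec" where
  "hessian q h k = comb2 (comb2 (X11 q) (X12 q) h) (comb2 (X21 q) (X22 q) h) k"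

lemma hessian_sym:
  assumes "q \<in> U"
  shows "hessian q h k = hessian q k h"
proof -
  have "X12 q = X21 q"
    by (rule mixed_partials_eq_vector[OF open_U assms X_deriv X1_deriv X2_deriv X12_cont X21_cont])
  then show ?thesis by (simp add: hessian_def comb2_def scaleR_add_right add_ac mult.commute)
qed

lemma dX_eq: "q \<in> U \<Longrightarrow> dX X q = comb2 (X1 q) (X2 q)"
  by (simp add: dX_def frechet_derivative_at[OF X_deriv])

lemma tangent_space_eq: "q \<in> U \<Longrightarrow> tangent_space X q = range (comb2 (X1 q) (X2 q))"
  by (simp add: tangent_space_def dX_eq)

lemma tan_part_eq:
  assumes "q \<in> U"
  shows "tan_part X q v = comb2 (X1 q) (X2 q) (coords2 (X1 q) (X2 q) v)"
  unfolding tan_part_def tangent_space_eq[OF assms] orth_proj_comb2_iff[OF nondegenerate[OF assms]]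
  by simp

lemma tan_part_iff:
  assumes "q \<in> U"
  shows "u = tan_part X q v \<longleftrightarrow> u \<in> tangent_space X q \<and> (\<forall>w\<in>tangent_space X q. mink (v - u) w = 0)"
  using orth_proj_comb2_iff[OF nondegenerate[OF assms]]
  by (simp add: tan_part_eq[OF assms] tangent_space_eq[OF assms])

lemma scaleR_in_tangent_space: "q \<in> U \<Longrightarrow> v \<in> tangent_space X q \<Longrightarrow> c *\<^sub>R v \<in> tangent_space X q"
  by (auto simp: tangent_space_eq simp flip: comb2_scaleR)

lemma tan_part_in_tangent_space: "q \<in> U \<Longrightarrow> tan_part X q v \<in> tangent_space X q"
  using tan_part_iff by blast

lemma orth_tan_part: "q \<in> U \<Longrightarrow> w \<in> tangent_space X q \<Longrightarrow> mink (v - tan_part X q v) w = 0"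
  using tan_part_iff by blast

lemma tan_part_eqI_frame:
  assumes q: "q \<in> U" and e: "e \<in> tangent_space X q" and f: "f \<in> tangent_space X q"
    and gram: "gram2 e f \<noteq> 0" and u: "u \<in> tangent_space X q"
    and orth: "mink (x - u) e = 0" "mink (x - u) f = 0"
  shows "tan_part X q x = u"
proof -
  obtain a b where ab: "e = comb2 (X1 q) (X2 q) a" "f = comb2 (X1 q) (X2 q) b"
    using e f tangent_space_eq[OF q] by auto
  with gram have det: "fst a * snd b - snd a * fst b \<noteq> 0"
    by (auto simp: gram2_comb2)
  have "mink (x - u) (comb2 (X1 q) (X2 q) k) = 0" for k
    by (rule orth_comb2_if_orth_pair[OF det]) (use ab orth in simp_all)
  then have "\<forall>w\<in>tangent_space X q. mink (x - u) w = 0"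
    by (auto simp: tangent_space_eq[OF q])
  with u tan_part_iff[OF q] have "u = tan_part X q x" by blast
  then show ?thesis ..
qed

lemma frechet_derivative_X1: "q \<in> U \<Longrightarrow> frechet_derivative X1 (at q) = comb2 (X11 q) (X12 q)"
  and frechet_derivative_X2: "q \<in> U \<Longrightarrow> frechet_derivative X2 (at q) = comb2 (X21 q) (X22 q)"
  using frechet_derivative_at[OF X1_deriv] frechet_derivative_at[OF X2_deriv] by simp_all

lemma coords2_field_differentiable:
  assumes "p \<in> U" "V differentiable (at p)"
  shows "(\<lambda>q. coords2 (X1 q) (X2 q) (V q)) differentiable (at p)"
  using assms nondegenerate[OF assms(1)] differentiableI[OF X1_deriv[OF assms(1)]]
    differentiableI[OF X2_deriv[OF assms(1)]]
  unfolding coords2_def gram2_def by (auto intro!: derivative_intros)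

lemma tan_part_differentiable:
  assumes p: "p \<in> U"
  shows "(\<lambda>q. tan_part X q Z) differentiable (at p)"
proof (rule differentiable_transform_within_open[OF _ open_U p])
  show "(\<lambda>q. comb2 (X1 q) (X2 q) (coords2 (X1 q) (X2 q) Z)) differentiable (at p)"
    using nondegenerate[OF p] differentiableI[OF X1_deriv[OF p]] differentiableI[OF X2_deriv[OF p]]
    unfolding comb2_def coords2_def gram2_def by (auto intro!: derivative_intros)
qed (simp add: tan_part_eq)

lemma comb2_coord_field:
  assumes "q \<in> U" "V q \<in> tangent_space X q"
  shows "comb2 (X1 q) (X2 q) (coord_field X V q) = V q"
  using assms unfolding coord_field_def by (simp add: dX_eq tangent_space_def f_inv_into_f)

lemma coord_field_eq:
  assumes "q \<in> U" "V q \<in> tangent_space X q"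
  shows "coord_field X V q = coords2 (X1 q) (X2 q) (V q)"
  using coords2_comb2[OF nondegenerate[OF assms(1)]] comb2_coord_field[of q V, OF assms] by metis

lemma coord_field_differentiable:
  assumes p: "p \<in> U" and V: "\<And>q. q \<in> U \<Longrightarrow> V q \<in> tangent_space X q"
    and V_diff: "V differentiable (at p)"
  shows "coord_field X V differentiable (at p)"
  by (rule differentiable_transform_within_open[OF coords2_field_differentiable[OF p V_diff] open_U p])
    (simp add: coord_field_eq V)

lemma tangent_field_derivative:
  assumes p: "p \<in> U" and V: "\<And>q. q \<in> U \<Longrightarrow> V q \<in> tangent_space X q"
    and V_diff: "V differentiable (at p)"
  shows "frechet_derivative V (at p) h
    = dX X p (frechet_derivative (coord_field X V) (at p) h) + hessian p h (coord_field X V p)"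
proof -
  let ?c = "coord_field X V" and ?Dc = "frechet_derivative (coord_field X V) (at p)"
  have c: "(?c has_derivative ?Dc) (at p)"
    using coord_field_differentiable[OF p V V_diff] frechet_derivative_works by blast
  have "((\<lambda>q. fst (?c q) *\<^sub>R X1 q + snd (?c q) *\<^sub>R X2 q) has_derivative
      (\<lambda>h. (fst (?c p) *\<^sub>R comb2 (X11 p) (X12 p) h + fst (?Dc h) *\<^sub>R X1 p)
         + (snd (?c p) *\<^sub>R comb2 (X21 p) (X22 p) h + snd (?Dc h) *\<^sub>R X2 p))) (at p)"
    by (intro has_derivative_add has_derivative_scaleR has_derivative_fst has_derivative_snd
        c X1_deriv X2_deriv p)
  then have "(V has_derivative
      (\<lambda>h. (fst (?c p) *\<^sub>R comb2 (X11 p) (X12 p) h + fst (?Dc h) *\<^sub>R X1 p)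
         + (snd (?c p) *\<^sub>R comb2 (X21 p) (X22 p) h + snd (?Dc h) *\<^sub>R X2 p))) (at p)"
    by (rule has_derivative_transform_within_open[OF _ open_U p])
      (metis comb2_coord_field comb2_def V)
  then show ?thesis
    by (simp add: frechet_derivative_at[symmetric] dX_eq[OF p] hessian_def comb2_def algebra_simps)
qed

lemma lie_bracket_eq_amb_deriv_diff:
  assumes p: "p \<in> U"
    and V: "\<And>q. q \<in> U \<Longrightarrow> V q \<in> tangent_space X q" and V_diff: "V differentiable (at p)"
    and Y: "\<And>q. q \<in> U \<Longrightarrow> Y q \<in> tangent_space X q" and Y_diff: "Y differentiable (at p)"
  shows "lie_bracket X p V Y = amb_deriv X p (V p) Y - amb_deriv X p (Y p) V"
proof -
  let ?v = "coord_field X V p" and ?y = "coord_field X Y p"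
  have "amb_deriv X p (V p) Y = dX X p (frechet_derivative (coord_field X Y) (at p) ?v) + hessian p ?v ?y"
    "amb_deriv X p (Y p) V = dX X p (frechet_derivative (coord_field X V) (at p) ?y) + hessian p ?y ?v"
    using tangent_field_derivative[OF p Y Y_diff] tangent_field_derivative[OF p V V_diff]
    by (simp_all add: amb_deriv_eq)
  then show ?thesis
    by (simp add: lie_bracket_eq_coord_fields dX_eq[OF p] comb2_diff hessian_sym[OF p])
qed

text \<open>Obtained by differentiating the normality of Z minus its tangential part against the
  coordinate fields X1, X2. By symmetry of the hessian, the derivative of the tangential part of a
  constant vector is therefore self-adjoint.\<close>

lemma mink_tan_part_derivative:
  assumes p: "p \<in> U"
  shows "mink (frechet_derivative (\<lambda>q. tan_part X q Z) (at p) h) (dX X p k)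
    = mink (Z - tan_part X p Z) (hessian p h k)"
proof -
  let ?ZT = "\<lambda>q. tan_part X q Z"
  have ZT_diff: "?ZT differentiable (at p)" by (rule tan_part_differentiable[OF p])
  have N_diff: "(\<lambda>q. Z - ?ZT q) differentiable (at p)"
    using ZT_diff by (auto intro: derivative_intros)
  have "X1 q \<in> tangent_space X q" "X2 q \<in> tangent_space X q" if "q \<in> U" for q
  proof -
    have "X1 q = comb2 (X1 q) (X2 q) (1, 0)" "X2 q = comb2 (X1 q) (X2 q) (0, 1)"
      by (simp_all add: comb2_def)
    then show "X1 q \<in> tangent_space X q" "X2 q \<in> tangent_space X q"
      unfolding tangent_space_eq[OF that] by (metis rangeI)+
  qed
  then have normal: "mink (Z - ?ZT q) (X1 q) = 0" "mink (Z - ?ZT q) (X2 q) = 0" if "q \<in> U" for q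
    using orth_tan_part that by blast+
  have "mink (Z - ?ZT p) (frechet_derivative X1 (at p) h)
      + mink (frechet_derivative (\<lambda>q. Z - ?ZT q) (at p) h) (X1 p) = 0"
    by (rule mink_derivative_eq_0_if_const[OF open_U p normal(1) N_diff differentiableI[OF X1_deriv[OF p]]])
  moreover have "mink (Z - ?ZT p) (frechet_derivative X2 (at p) h)
      + mink (frechet_derivative (\<lambda>q. Z - ?ZT q) (at p) h) (X2 p) = 0"
    by (rule mink_derivative_eq_0_if_const[OF open_U p normal(2) N_diff differentiableI[OF X2_deriv[OF p]]])
  ultimately have "mink (Z - ?ZT p) (comb2 (X11 p) (X12 p) h) = mink (frechet_derivative ?ZT (at p) h) (X1 p)"
    "mink (Z - ?ZT p) (comb2 (X21 p) (X22 p) h) = mink (frechet_derivative ?ZT (at p) h) (X2 p)"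
    by (simp_all add: frechet_derivative_X1 frechet_derivative_X2 p frechet_derivative_const_minus[OF ZT_diff])
  then show ?thesis
    by (simp add: dX_eq[OF p] hessian_def mink_comb2_right comb2_def)
qed

lemma dX_coord_field:
  assumes "q \<in> U" "V q \<in> tangent_space X q"
  shows "dX X q (coord_field X V q) = V q"
  using comb2_coord_field[of q V, OF assms] dX_eq[OF assms(1)] by simp

lemma tan_part_tangent: "q \<in> U \<Longrightarrow> v \<in> tangent_space X q \<Longrightarrow> tan_part X q v = v"
  using tan_part_iff by (metis diff_self mink_zero_left)

lemma tan_part_diff:
  assumes q: "q \<in> U"
  shows "tan_part X q (x - y) = tan_part X q x - tan_part X q y"
proof -
  have "tan_part X q x - tan_part X q y \<in> tangent_space X q"
    by (simp add: tan_part_eq[OF q] tangent_space_eq[OF q] flip: comb2_diff)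
  moreover have "mink (x - y - (tan_part X q x - tan_part X q y)) w = 0" if "w \<in> tangent_space X q" for w
    using orth_tan_part[OF q that, of x] orth_tan_part[OF q that, of y] by (simp add: algebra_simps)
  ultimately show ?thesis using tan_part_iff[OF q] by metis
qed

lemma lie_bracket_eq_cov_diff:
  assumes p: "p \<in> U"
    and V: "\<And>q. q \<in> U \<Longrightarrow> V q \<in> tangent_space X q" and V_diff: "V differentiable (at p)"
    and Y: "\<And>q. q \<in> U \<Longrightarrow> Y q \<in> tangent_space X q" and Y_diff: "Y differentiable (at p)"
  shows "lie_bracket X p V Y = cov X p V Y - cov X p Y V"
proof -
  have "lie_bracket X p V Y \<in> tangent_space X p"
    by (simp add: lie_bracket_def Let_def tangent_space_def)
  then have "lie_bracket X p V Y = tan_part X p (lie_bracket X p V Y)"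
    by (simp add: tan_part_tangent[OF p])
  also have "\<dots> = cov X p V Y - cov X p Y V"
    by (simp add: lie_bracket_eq_amb_deriv_diff[OF assms] tan_part_diff[OF p] cov_def)
  finally show ?thesis .
qed

end

section \<open>Null frames\<close>

locale null_frame_patch = C2_patch U X X1 X2 X11 X12 X21 X22
  for U and X :: "real \<times> real \<Rightarrow> 'n::finite mink_vec" and X1 X2 X11 X12 X21 X22 +
  fixes Z :: "'n mink_vec" and W :: "real \<times> real \<Rightarrow> 'n mink_vec"
  assumes ZT_null: "q \<in> U \<Longrightarrow> mink (tan_part X q Z) (tan_part X q Z) = 0"
    and W_tangent: "q \<in> U \<Longrightarrow> W q \<in> tangent_space X q"
    and W_null: "q \<in> U \<Longrightarrow> mink (W q) (W q) = 0"
    and ZT_W: "q \<in> U \<Longrightarrow> mink (tan_part X q Z) (W q) = -1"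
    and W_diff: "q \<in> U \<Longrightarrow> W differentiable (at q)"
begin

abbreviation ZT :: "real \<times> real \<Rightarrow> 'n mink_vec" where
  "ZT \<equiv> \<lambda>q. tan_part X q Z"

abbreviation normal_curvature :: "real \<times> real \<Rightarrow> real" where
  "normal_curvature q \<equiv> mink (sff X q W W) (nor_part X q Z)"

context
  fixes p assumes p: "p \<in> U"
begin

lemma tan_part_eqI_null_frame:
  assumes "u \<in> tangent_space X p" "mink (x - u) (ZT p) = 0" "mink (x - u) (W p) = 0"
  shows "tan_part X p x = u"
proof (rule tan_part_eqI_frame[OF p tan_part_in_tangent_space[OF p] W_tangent[OF p] _ assms])
  show "gram2 (ZT p) (W p) \<noteq> 0"
    by (simp add: gram2_def ZT_null[OF p] W_null[OF p] ZT_W[OF p])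
qed

lemma mink_dZT_ZT: "mink (frechet_derivative ZT (at p) h) (ZT p) = 0"
  using mink_derivative_eq_0_if_const[OF open_U p ZT_null tan_part_differentiable[OF p]
      tan_part_differentiable[OF p]]
  by (simp add: mink_comm[of "ZT p"])

lemma mink_dW_W: "mink (frechet_derivative W (at p) h) (W p) = 0"
  using mink_derivative_eq_0_if_const[OF open_U p W_null W_diff[OF p] W_diff[OF p]]
  by (simp add: mink_comm[of "W p"])

lemma mink_dZT_W: "mink (frechet_derivative ZT (at p) h) (W p) = - mink (ZT p) (frechet_derivative W (at p) h)"
  using mink_derivative_eq_0_if_const[OF open_U p ZT_W tan_part_differentiable[OF p] W_diff[OF p],
      where h = h]
  by linarith

lemma mink_W_dZT: "mink (W p) (frechet_derivative ZT (at p) h) = mink (frechet_derivative W (at p) h) (Z - ZT p)"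
proof -
  have "mink (W q) (Z - ZT q) = 0" if "q \<in> U" for q
    using orth_tan_part[OF that W_tangent[OF that]] by (simp add: mink_comm[of "W q"])
  from mink_derivative_eq_0_if_const[OF open_U p this W_diff[OF p]]
  show ?thesis
    by (simp add: frechet_derivative_const_minus tan_part_differentiable[OF p] derivative_intros)
qed

text \<open>Self-adjointness of the derivative of ZT turns the W-component of its derivative along ZT
  into the ZT-component of its derivative along W, which vanishes since ZT is null.\<close>

lemma mink_dZT_along_ZT_W: "mink (frechet_derivative ZT (at p) (coord_field X ZT p)) (W p) = 0"
proof -
  let ?z = "coord_field X ZT p" and ?w = "coord_field X W p"
  have "mink (frechet_derivative ZT (at p) ?z) (W p) = mink (frechet_derivative ZT (at p) ?z) (dX X p ?w)"
    by (simp add: dX_coord_field[of p W, OF p W_tangent[OF p]])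
  also have "\<dots> = mink (frechet_derivative ZT (at p) ?w) (dX X p ?z)"
    by (simp add: mink_tan_part_derivative[OF p] hessian_sym[OF p])
  also have "\<dots> = 0"
    by (simp add: dX_coord_field[of p ZT, OF p tan_part_in_tangent_space[OF p]] mink_dZT_ZT)
  finally show ?thesis .
qed

lemma sff_W_W: "mink (sff X p W W) (nor_part X p Z)
    = mink (frechet_derivative W (at p) (coord_field X W p)) (Z - ZT p)"
proof -
  let ?x = "frechet_derivative W (at p) (coord_field X W p)"
  have "mink (tan_part X p ?x) (Z - ZT p) = 0"
    using orth_tan_part[OF p tan_part_in_tangent_space[OF p], of Z ?x] by (simp add: mink_comm)
  then show ?thesis by (simp add: sff_def nor_part_def amb_deriv_eq)
qed

lemma cov_ZT_ZT: "cov X p ZT ZT = 0"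
  unfolding cov_def amb_deriv_eq[of X p ZT]
  using scaleR_in_tangent_space[OF p tan_part_in_tangent_space[OF p], of 0]
  by (intro tan_part_eqI_null_frame) (simp_all add: mink_dZT_ZT mink_dZT_along_ZT_W)

lemma cov_ZT_W: "cov X p ZT W = 0"
  unfolding cov_def amb_deriv_eq[of X p ZT]
  using scaleR_in_tangent_space[OF p tan_part_in_tangent_space[OF p], of 0]
    mink_dZT_W[of "coord_field X ZT p"]
  by (intro tan_part_eqI_null_frame) (simp_all add: mink_dZT_along_ZT_W mink_dW_W mink_comm[of "ZT p"])

lemma cov_W_ZT: "cov X p W ZT = - normal_curvature p *\<^sub>R ZT p"
  unfolding cov_def amb_deriv_eq
proof (rule tan_part_eqI_null_frame)
  show "- normal_curvature p *\<^sub>R ZT p \<in> tangent_space X p"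
    by (rule scaleR_in_tangent_space[OF p tan_part_in_tangent_space[OF p]])
  show "mink (frechet_derivative ZT (at p) (coord_field X W p) - - normal_curvature p *\<^sub>R ZT p) (ZT p) = 0"
    by (simp add: mink_dZT_ZT ZT_null[OF p])
  show "mink (frechet_derivative ZT (at p) (coord_field X W p) - - normal_curvature p *\<^sub>R ZT p) (W p) = 0"
    using mink_W_dZT[of "coord_field X W p"] by (simp add: sff_W_W ZT_W[OF p] mink_comm[of "W p"])
qed

lemma cov_W_W: "cov X p W W = normal_curvature p *\<^sub>R W p"
  unfolding cov_def amb_deriv_eq
proof (rule tan_part_eqI_null_frame)
  show "normal_curvature p *\<^sub>R W p \<in> tangent_space X p"
    by (rule scaleR_in_tangent_space[OF p W_tangent[OF p]])
  show "mink (frechet_derivative W (at p) (coord_field X W p) - normal_curvature p *\<^sub>R W p) (ZT p) = 0"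
    using mink_dZT_W[of "coord_field X W p"] mink_W_dZT[of "coord_field X W p"]
    by (simp add: sff_W_W mink_comm[of "W p"] mink_comm[of _ "ZT p"] ZT_W[OF p])
  show "mink (frechet_derivative W (at p) (coord_field X W p) - normal_curvature p *\<^sub>R W p) (W p) = 0"
    by (simp add: mink_dW_W W_null[OF p])
qed

lemma lie_bracket_ZT_W: "lie_bracket X p ZT W = normal_curvature p *\<^sub>R ZT p"
  using lie_bracket_eq_cov_diff[OF p tan_part_in_tangent_space tan_part_differentiable[OF p]
      W_tangent W_diff[OF p]]
  by (simp add: cov_ZT_W cov_W_ZT)

end

end

lemma smooth_on_differentiable:
  assumes "smooth_on U f" "q \<in> U"
  shows "f differentiable (at q)"
proof -
  from assms(1) have "Ck_on (Suc 0) U f" unfolding smooth_on_def by blast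
  with assms(2) show ?thesis by (auto intro: differentiableI)
qed

lemma timelike_surface_C2_patch:
  assumes surf: "timelike_surface U X"
  obtains X1 X2 X11 X12 X21 X22 where "C2_patch U X X1 X2 X11 X12 X21 X22"
proof -
  have "Ck_on (Suc (Suc 0)) U X" using surf by (simp add: timelike_surface_def smooth_on_def)
  then obtain X1 X2 X11 X12 X21 X22 where
    X_deriv: "\<forall>q\<in>U. (X has_derivative comb2 (X1 q) (X2 q)) (at q)"
    and X1_deriv: "\<forall>q\<in>U. (X1 has_derivative comb2 (X11 q) (X12 q)) (at q)"
    and X2_deriv: "\<forall>q\<in>U. (X2 has_derivative comb2 (X21 q) (X22 q)) (at q)"
    and cont: "continuous_on U X12" "continuous_on U X21"
    unfolding Ck_on.simps comb2_def[abs_def] by blast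
  have "gram2 (X1 q) (X2 q) \<noteq> 0" if q: "q \<in> U" for q
  proof -
    obtain e1 e2 where e: "e1 \<in> tangent_space X q" "e2 \<in> tangent_space X q"
      and "mink e1 e1 = -1" "mink e2 e2 = 1" "mink e1 e2 = 0"
      using surf q unfolding timelike_surface_def by blast
    then have "gram2 e1 e2 = -1" by (simp add: gram2_def)
    moreover have "tangent_space X q = range (comb2 (X1 q) (X2 q))"
      using q X_deriv frechet_derivative_at by (metis tangent_space_def dX_def)
    then obtain k1 k2 where "e1 = comb2 (X1 q) (X2 q) k1" "e2 = comb2 (X1 q) (X2 q) k2"
      using e by auto
    ultimately show ?thesis by (auto simp: gram2_comb2)
  qed
  with surf X_deriv X1_deriv X2_deriv cont show thesis
    by (intro that[of X1 X2 X11 X12 X21 X22] C2_patch.intro) (simp_all add: timelike_surface_def)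
qed

theorem mainTheorem3:
  fixes U :: "(real \<times> real) set"
    and X :: "real \<times> real \<Rightarrow> 'n::finite mink_vec"
    and Z :: "'n mink_vec"
    and W :: "real \<times> real \<Rightarrow> 'n mink_vec"
  assumes surf: "timelike_surface U X"
    and Z_unit: "mink Z Z = 1"
    and null_dir: "\<forall>q\<in>U. lightlike (tan_part X q Z)"
    and W_smooth: "smooth_on U W"
    and W_props: "\<forall>q\<in>U. W q \<in> tangent_space X q \<and> lightlike (W q) \<and> mink (tan_part X q Z) (W q) = -1"
    and p: "p \<in> U"
  defines "ZT \<equiv> (\<lambda>q. tan_part X q Z)"
    and "a \<equiv> (\<lambda>q. mink (sff X q W W) (nor_part X q Z))"
  shows "cov X p ZT ZT = 0 \<and> cov X p ZT W = 0 \<and> cov X p W ZT = - a p *\<^sub>R ZT p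
         \<and> cov X p W W = a p *\<^sub>R W p \<and> lie_bracket X p ZT W = a p *\<^sub>R ZT p"
proof -
  obtain X1 X2 X11 X12 X21 X22 where patch: "C2_patch U X X1 X2 X11 X12 X21 X22"
    using timelike_surface_C2_patch[OF surf] .
  interpret null_frame_patch U X X1 X2 X11 X12 X21 X22 Z W
  proof (rule null_frame_patch.intro[OF patch], unfold_locales)
    fix q assume "q \<in> U"
    then show "mink (tan_part X q Z) (tan_part X q Z) = 0" "W q \<in> tangent_space X q"
      "mink (W q) (W q) = 0" "mink (tan_part X q Z) (W q) = -1" "W differentiable (at q)"
      using null_dir W_props smooth_on_differentiable[OF W_smooth] by (auto simp: lightlike_def)
  qed
  show ?thesis
    unfolding ZT_def a_def
    using cov_ZT_ZT[OF p] cov_ZT_W[OF p] cov_W_ZT[OF p] cov_W_W[OF p] lie_bracket_ZT_W[OF p]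
    by blast
qed

end
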